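(* Let $G$, $\sigma$, $X$ (strict wonderful of rank $r$ with canonical real structure $\mu$), $T$, $Z$ be as in the context. Let $x$ be a real point ($\mu(x)=x$) in $X^\circ_G\cap Z$, let $H$ be its stabilizer in $G$, let $A=T/(T\cap H)$ and let ${}_2A\subset A$ be the subgroup of elements of order at most $2$. Then the $T^\sigma_0$-orbits in $\mathbb RZ\cap X^\circ_G$ are in one-to-one correspondence with the elements of ${}_2A$. In particular, the number of such orbits does not exceed $2^r$.
   Context: $G$ is a connected reductive complex algebraic group; $\sigma=\tau\circ\theta$ with $\theta$ a Weyl involution (algebraic involution with $\theta(t)=t^{-1}$ on a maximal torus) and $\tau$ the Cartan involution of a $\theta$-stable maximal compact subgroup. A wonderful $G$-variety of rank $r$ is a complete smooth $G$-variety with an open $G$-orbit $X^\circ_G$ whose complement is a union of $r$ smooth prime divisors with normal crossings, the $G$-orbit closures being their partial intersections; strict means all stabilizers are self-normalizing. The canonical real structure is the unique algebraic anti-holomorphic involution $\mu$ with $\mu(gx)=\sigma(g)\mu(x)$; $\mathbb RX$ is its fixed set and $\mathbb RZ=Z\cap\mathbb RX$. $T$ is a maximal torus with $\sigma(T)=T$, acting as $z\mapsto\bar z$ in coordinates; $T^\sigma_0$ is the identity component of its $\sigma$-fixed group. $Z$ is the $\mu$-stable slice of the Local Structure Theorem: with $B\supset T$ a $\sigma$-stable Borel, $B^-$ its opposite, $y$ the $B^-$-fixed point of the closed orbit, $P$ the parabolic opposite to $G_y$ containing $T$, $L=P\cap G_y$, $P^u$ the unipotent radical, $Z$ is an $L$-stable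 affine subvariety through $y$ with $P^u\times Z\cong X\setminus\bigcup D$ (union of $B$-stable non-$G$-stable prime divisors), constructed in a $\sigma$-compatible simple projective embedding so that $\mu(Z)=Z$. $Z$ is an affine space of dimension $r$ on which $T$ acts linearly with linearly independent characters $\gamma_1,\dots,\gamma_r$ (the spherical roots), meeting each $G$-orbit in one $T$-orbit, and $T\cap H=\bigcap_i\ker\gamma_i$. *)

theory Defs
  imports Complex_Main
begin

text \<open>The maximal torus T of dimension n is (C^*)^n; an element is a function
  nat => complex, nonzero on indices < n and equal to 1 elsewhere.\<close>

definition torus :: "nat \<Rightarrow> (nat \<Rightarrow> complex) set" where
  "torus n = {t. (\<forall>j<n. t j \<noteq> 0) \<and> (\<forall>j\<ge>n. t j = 1)}"

definition tmult :: "(nat \<Rightarrow> complex) \<Rightarrow> (nat \<Rightarrow> complex) \<Rightarrow> nat \<Rightarrow> complex" where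
  "tmult s t = (\<lambda>j. s j * t j)"

definition chi :: "nat \<Rightarrow> (nat \<Rightarrow> int) \<Rightarrow> (nat \<Rightarrow> complex) \<Rightarrow> complex" where
  "chi n g t = (\<Prod>j<n. t j powi g j)"

text \<open>Characters gamma_1..gamma_r (rows g i, i < r) linearly independent
  (over Q, equivalently over R) in the character lattice.\<close>
definition lin_indep_chars :: "nat \<Rightarrow> nat \<Rightarrow> (nat \<Rightarrow> nat \<Rightarrow> int) \<Rightarrow> bool" where
  "lin_indep_chars n r g \<longleftrightarrow>
     (\<forall>c :: nat \<Rightarrow> real. (\<forall>j<n. (\<Sum>i<r. c i * of_int (g i j)) = 0) \<longrightarrow> (\<forall>i<r. c i = 0))"

text \<open>The slice Z as the affine space C^r (coordinates >= r are 0).\<close>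
definition affsp :: "nat \<Rightarrow> (nat \<Rightarrow> complex) set" where
  "affsp r = {z. \<forall>i\<ge>r. z i = 0}"

definition act :: "nat \<Rightarrow> nat \<Rightarrow> (nat \<Rightarrow> nat \<Rightarrow> int) \<Rightarrow> (nat \<Rightarrow> complex) \<Rightarrow> (nat \<Rightarrow> complex) \<Rightarrow> nat \<Rightarrow> complex" where
  "act n r g t z = (\<lambda>i. if i < r then chi n (g i) t * z i else 0)"

definition sigmaT :: "(nat \<Rightarrow> complex) \<Rightarrow> nat \<Rightarrow> complex" where
  "sigmaT t = (\<lambda>j. cnj (t j))"

text \<open>T^sigma = (R^*)^n; its identity component T^sigma_0 = (R_{>0})^n.\<close>
definition torus_sigma :: "nat \<Rightarrow> (nat \<Rightarrow> complex) set" where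
  "torus_sigma n = {t \<in> torus n. sigmaT t = t}"

definition torus_sigma0 :: "nat \<Rightarrow> (nat \<Rightarrow> complex) set" where
  "torus_sigma0 n = {t \<in> torus_sigma n. \<forall>j<n. Re (t j) > 0}"

text \<open>X_G^o \<inter> Z: the T-orbit of x (the open G-orbit meets Z in one T-orbit).\<close>
definition open_part :: "nat \<Rightarrow> nat \<Rightarrow> (nat \<Rightarrow> nat \<Rightarrow> int) \<Rightarrow> (nat \<Rightarrow> complex) \<Rightarrow> (nat \<Rightarrow> complex) set" where
  "open_part n r g x = {act n r g t x | t. t \<in> torus n}"

definition real_open_part where
  "real_open_part n r g mu x = {z \<in> open_part n r g x. mu z = z}"

definition sigma0_orbits where
  "sigma0_orbits n r g mu x =
     {{act n r g t z | t. t \<in> torus_sigma0 n} | z. z \<in> real_open_part n r g mu x}"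

definition stabT where
  "stabT n r g x = {t \<in> torus n. act n r g t x = x}"

definition cosetT where
  "cosetT n K t = {tmult t h | h. h \<in> K}"

definition quotA where
  "quotA n r g x = {cosetT n (stabT n r g x) t | t. t \<in> torus n}"

definition twoA where
  "twoA n r g x = {cosetT n (stabT n r g x) t | t. t \<in> torus n \<and> tmult t t \<in> stabT n r g x}"

end

theory Submission imports Defs "HOL-Library.FuncSet" begin

text \<open>Since every coordinate of \<open>x\<close> is nonzero, a point \<open>t x\<close> of the open part of \<open>Z\<close> is
  determined by the values \<open>\<gamma>\<^sub>i(t)\<close>, and \<open>t\<close> stabilises \<open>x\<close> iff all \<open>\<gamma>\<^sub>i(t) = 1\<close>.  Hence
  \<open>t (T \<inter> H)\<close> has order at most 2 in \<open>A\<close> iff all \<open>\<gamma>\<^sub>i(t) = \<plusminus>1\<close>, and \<open>t x\<close> is real iff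
  all \<open>\<gamma>\<^sub>i(t)\<close> are real.  Writing \<open>t = u p\<close> with \<open>|u\<^sub>j| = 1\<close> and \<open>p \<in> T\<^sup>\<sigma>\<^sub>0\<close>, the values
  \<open>\<gamma>\<^sub>i(p)\<close> are positive, so every \<open>T\<^sup>\<sigma>\<^sub>0\<close>-orbit of real points contains exactly one point
  whose \<open>\<gamma>\<close>-values are signs.  Both sets are thus indexed by the sign vectors
  \<open>(\<gamma>\<^sub>i(t))\<^sub>i \<in> {\<plusminus>1}\<^sup>r\<close> that occur.\<close>

lemma torus_nonzero: "t \<in> torus n \<Longrightarrow> t j \<noteq> 0"
  unfolding torus_def by (cases "j < n") auto

lemma tmult_torus: "s \<in> torus n \<Longrightarrow> t \<in> torus n \<Longrightarrow> tmult s t \<in> torus n"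
  unfolding torus_def tmult_def by auto

lemma chi_tmult: "chi n g (tmult s t) = chi n g s * chi n g t"
  by (simp add: chi_def tmult_def power_int_mult_distrib prod.distrib)

lemma chi_sigmaT: "chi n g (sigmaT t) = cnj (chi n g t)"
  by (simp add: chi_def sigmaT_def cnj_prod complex_cnj_power_int)

lemma chi_nonzero: "t \<in> torus n \<Longrightarrow> chi n g t \<noteq> 0"
  by (auto simp: chi_def torus_def power_int_eq_0_iff)

lemma norm_chi: "norm (chi n g t) = (\<Prod>j<n. norm (t j) powi g j)"
  by (simp add: chi_def prod_norm[symmetric] norm_power_int)

lemma act_tmult: "act n r g s (act n r g t z) = act n r g (tmult s t) z"
  by (auto simp: act_def chi_tmult fun_eq_iff)

lemma torus_sigma0_iff:
  "t \<in> torus_sigma0 n \<longleftrightarrow> (\<forall>j<n. Im (t j) = 0 \<and> Re (t j) > 0) \<and> (\<forall>j\<ge>n. t j = 1)"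
proof
  assume t: "t \<in> torus_sigma0 n"
  then have "cnj (t j) = t j" for j
    by (auto simp: torus_sigma0_def torus_sigma_def sigmaT_def fun_eq_iff)
  then have "Im (t j) = 0" for j
    by (metis Reals_cnj_iff complex_is_Real_iff)
  with t show "(\<forall>j<n. Im (t j) = 0 \<and> Re (t j) > 0) \<and> (\<forall>j\<ge>n. t j = 1)"
    by (auto simp: torus_sigma0_def torus_sigma_def torus_def)
next
  assume t: "(\<forall>j<n. Im (t j) = 0 \<and> Re (t j) > 0) \<and> (\<forall>j\<ge>n. t j = 1)"
  then have "cnj (t j) = t j" for j
    by (cases "j < n") (auto simp: complex_eq_iff)
  with t show "t \<in> torus_sigma0 n"
    by (auto simp: torus_sigma0_def torus_sigma_def torus_def sigmaT_def complex_eq_iff)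
qed

lemma chi_torus_sigma0:
  assumes "t \<in> torus_sigma0 n"
  obtains \<rho> where "\<rho> > 0" "chi n g t = of_real \<rho>"
proof
  have t_real: "t j = of_real (Re (t j))" and "Re (t j) > 0" if "j < n" for j
    using assms that by (auto simp: torus_sigma0_iff complex_eq_iff)
  then show "(\<Prod>j<n. Re (t j) powi g j) > 0"
    by (auto intro!: prod_pos)
  have "chi n g t = (\<Prod>j<n. of_real (Re (t j)) powi g j)"
    unfolding chi_def by (intro prod.cong refl) (metis lessThan_iff t_real)
  then show "chi n g t = of_real (\<Prod>j<n. Re (t j) powi g j)"
    by (simp add: of_real_power_int)
qed

lemma tmult_torus_sigma0:
  "s \<in> torus_sigma0 n \<Longrightarrow> t \<in> torus_sigma0 n \<Longrightarrow> tmult s t \<in> torus_sigma0 n"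
  unfolding torus_sigma0_iff tmult_def by auto

lemma divide_torus_sigma0:
  "s \<in> torus_sigma0 n \<Longrightarrow> t \<in> torus_sigma0 n \<Longrightarrow> (\<lambda>j. s j / t j) \<in> torus_sigma0 n"
  unfolding torus_sigma0_iff by (auto simp: Im_divide Re_divide intro!: divide_pos_pos)

lemma torus_polar_decomposition:
  assumes "t \<in> torus n"
  obtains u p where "u \<in> torus n" "p \<in> torus_sigma0 n" "t = tmult u p"
    "\<And>h. norm (chi n h u) = 1"
proof
  let ?p = "\<lambda>j. complex_of_real (norm (t j))"
  have nz: "t j \<noteq> 0" for j
    using assms by (rule torus_nonzero)
  show "?p \<in> torus_sigma0 n" and "(\<lambda>j. t j / ?p j) \<in> torus n"
    using assms nz by (auto simp: torus_sigma0_iff torus_def)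
  show "t = tmult (\<lambda>j. t j / ?p j) ?p"
    using nz by (simp add: tmult_def)
  show "norm (chi n h (\<lambda>j. t j / ?p j)) = 1" for h
    using nz by (simp add: norm_chi norm_divide)
qed

lemma real_unit_complex:
  assumes "norm (a :: complex) = 1" "a \<in> \<real>"
  shows "a = 1 \<or> a = -1"
proof -
  obtain b where b: "a = of_real b"
    using assms(2) by (auto elim: Reals_cases)
  then have "\<bar>b\<bar> = 1"
    using assms(1) by simp
  then have "b = 1 \<or> b = -1"
    by auto
  then show ?thesis
    using b by auto
qed

definition sign_vec :: "nat \<Rightarrow> (nat \<Rightarrow> complex) \<Rightarrow> bool" where
  "sign_vec r s \<longleftrightarrow> (\<forall>i<r. s i = 1 \<or> s i = -1) \<and> (\<forall>i\<ge>r. s i = 0)"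

lemma finite_card_sign_vecs:
  "finite (Collect (sign_vec r)) \<and> card (Collect (sign_vec r)) \<le> 2 ^ r"
proof -
  let ?ext = "\<lambda>f i. if i < r then f i else (0::complex)"
  let ?P = "PiE {..<r} (\<lambda>_. {1, -1::complex})"
  have sub: "Collect (sign_vec r) \<subseteq> ?ext ` ?P"
  proof
    fix s assume "s \<in> Collect (sign_vec r)"
    then have "restrict s {..<r} \<in> ?P" and "s = ?ext (restrict s {..<r})"
      by (auto simp: sign_vec_def fun_eq_iff)
    then show "s \<in> ?ext ` ?P"
      by blast
  qed
  have P: "finite ?P"
    by (simp add: finite_PiE)
  then have fin: "finite (?ext ` ?P)"
    by (rule finite_imageI)
  have "card (?ext ` ?P) \<le> 2 ^ r"
    using card_image_le[OF P, of ?ext] by (simp add: card_PiE numeral_2_eq_2)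
  moreover have "card (Collect (sign_vec r)) \<le> card (?ext ` ?P)"
    using fin sub by (rule card_mono)
  ultimately show ?thesis
    using finite_subset[OF sub fin] by simp
qed

definition char_vec :: "nat \<Rightarrow> nat \<Rightarrow> (nat \<Rightarrow> nat \<Rightarrow> int) \<Rightarrow> (nat \<Rightarrow> complex) \<Rightarrow> nat \<Rightarrow> complex" where
  "char_vec n r g t = (\<lambda>i. if i < r then chi n (g i) t else 0)"

lemma char_vec_eq_iff:
  "char_vec n r g s = char_vec n r g t \<longleftrightarrow> (\<forall>i<r. chi n (g i) s = chi n (g i) t)"
  by (auto simp: char_vec_def fun_eq_iff)

lemma sign_vec_char_vec:
  "sign_vec r (char_vec n r g t) \<longleftrightarrow> (\<forall>i<r. chi n (g i) t = 1 \<or> chi n (g i) t = -1)"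
  by (simp add: sign_vec_def char_vec_def)

definition pos_orbit :: "nat \<Rightarrow> nat \<Rightarrow> (nat \<Rightarrow> nat \<Rightarrow> int) \<Rightarrow> (nat \<Rightarrow> complex) \<Rightarrow> (nat \<Rightarrow> complex) set" where
  "pos_orbit n r g z = {act n r g t z | t. t \<in> torus_sigma0 n}"

lemma pos_orbit_self: "z \<in> affsp r \<Longrightarrow> z \<in> pos_orbit n r g z"
proof -
  assume "z \<in> affsp r"
  then have "act n r g (\<lambda>j. 1) z = z"
    by (auto simp: act_def chi_def affsp_def fun_eq_iff)
  moreover have "(\<lambda>j. 1) \<in> torus_sigma0 n"
    by (simp add: torus_sigma0_iff)
  ultimately show ?thesis
    unfolding pos_orbit_def by force
qed

lemma pos_orbit_act:
  assumes p: "p \<in> torus_sigma0 n"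
  shows "pos_orbit n r g (act n r g p z) = pos_orbit n r g z"
proof (intro equalityI subsetI)
  fix y assume "y \<in> pos_orbit n r g (act n r g p z)"
  then obtain s where "s \<in> torus_sigma0 n" "y = act n r g (tmult s p) z"
    by (auto simp: pos_orbit_def act_tmult)
  then show "y \<in> pos_orbit n r g z"
    using p unfolding pos_orbit_def by (blast intro: tmult_torus_sigma0)
next
  fix y assume "y \<in> pos_orbit n r g z"
  then obtain s where s: "s \<in> torus_sigma0 n" "y = act n r g s z"
    by (auto simp: pos_orbit_def)
  have "p j \<noteq> 0" for j
    using p by (cases "j < n") (auto simp: torus_sigma0_iff)
  then have "tmult (\<lambda>j. s j / p j) p = s"
    by (simp add: tmult_def)
  then have "y = act n r g (\<lambda>j. s j / p j) (act n r g p z)"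
    by (simp add: s(2) act_tmult)
  then show "y \<in> pos_orbit n r g (act n r g p z)"
    using divide_torus_sigma0[OF s(1) p] unfolding pos_orbit_def by blast
qed

lemma pos_orbit_sign_vec_inj:
  assumes s: "sign_vec r s" and s': "sign_vec r s'" and x: "\<And>i. i < r \<Longrightarrow> x i \<noteq> 0"
    and eq: "pos_orbit n r g (\<lambda>i. s i * x i) = pos_orbit n r g (\<lambda>i. s' i * x i)"
  shows "s = s'"
proof -
  have "(\<lambda>i. s i * x i) \<in> affsp r"
    using s by (simp add: sign_vec_def affsp_def)
  then obtain p where p: "p \<in> torus_sigma0 n"
    and sx: "(\<lambda>i. s i * x i) = act n r g p (\<lambda>i. s' i * x i)"
    using pos_orbit_self eq unfolding pos_orbit_def by blast
  have "s i = s' i" if i: "i < r" for i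
  proof -
    obtain \<rho> where \<rho>: "\<rho> > 0" "chi n (g i) p = of_real \<rho>"
      using chi_torus_sigma0[OF p] .
    have "s i * x i = of_real \<rho> * s' i * x i"
      using fun_cong[OF sx, of i] i \<rho>(2) by (simp add: act_def)
    then have "Re (s i) = \<rho> * Re (s' i)"
      using x[OF i] by simp
    moreover have "s i = 1 \<or> s i = -1" "s' i = 1 \<or> s' i = -1"
      using s s' i by (auto simp: sign_vec_def)
    ultimately show ?thesis
      using \<rho>(1) by (elim disjE) auto
  qed
  moreover have "s i = s' i" if "i \<ge> r" for i
    using s s' that by (simp add: sign_vec_def)
  ultimately show ?thesis
    by (meson ext not_le)
qed

locale slice_point =
  fixes n r :: nat and g :: "nat \<Rightarrow> nat \<Rightarrow> int" and x :: "nat \<Rightarrow> complex"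
  assumes x_Z: "x \<in> affsp r"
    and x_open: "\<And>i. i < r \<Longrightarrow> x i \<noteq> 0"
begin

definition sign_chars :: "(nat \<Rightarrow> complex) set" where
  "sign_chars = {char_vec n r g t | t. t \<in> torus n \<and> sign_vec r (char_vec n r g t)}"

lemma finite_card_sign_chars: "finite sign_chars \<and> card sign_chars \<le> 2 ^ r"
proof -
  have sub: "sign_chars \<subseteq> Collect (sign_vec r)"
    by (auto simp: sign_chars_def)
  obtain fin: "finite (Collect (sign_vec r))" and card: "card (Collect (sign_vec r)) \<le> 2 ^ r"
    using finite_card_sign_vecs by blast
  show ?thesis
    using finite_subset[OF sub fin] card_mono[OF fin sub] card by simp
qed

definition char_fibre :: "(nat \<Rightarrow> complex) \<Rightarrow> (nat \<Rightarrow> complex) set" where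
  "char_fibre s = {t \<in> torus n. char_vec n r g t = s}"

lemma act_x: "act n r g t x = (\<lambda>i. char_vec n r g t i * x i)"
  using x_Z by (auto simp: act_def char_vec_def affsp_def fun_eq_iff)

lemma act_x_eq_iff:
  "act n r g s x = act n r g t x \<longleftrightarrow> char_vec n r g s = char_vec n r g t"
  using x_open by (auto simp: act_x char_vec_def fun_eq_iff)

lemma stabT_iff: "h \<in> stabT n r g x \<longleftrightarrow> h \<in> torus n \<and> (\<forall>i<r. chi n (g i) h = 1)"
proof -
  have "act n r g h x = act n r g (\<lambda>j. 1) x \<longleftrightarrow> (\<forall>i<r. chi n (g i) h = 1)"
    by (simp add: act_x_eq_iff char_vec_eq_iff chi_def)
  moreover have "act n r g (\<lambda>j. 1) x = x"
    using x_Z by (auto simp: act_def chi_def affsp_def fun_eq_iff)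
  ultimately show ?thesis
    unfolding stabT_def by auto
qed

lemma cosetT_stabT:
  assumes t: "t \<in> torus n"
  shows "cosetT n (stabT n r g x) t = char_fibre (char_vec n r g t)"
proof (intro equalityI subsetI)
  fix y assume "y \<in> cosetT n (stabT n r g x) t"
  then obtain h where "h \<in> stabT n r g x" "y = tmult t h"
    unfolding cosetT_def by auto
  then show "y \<in> char_fibre (char_vec n r g t)"
    using t by (auto simp: char_fibre_def stabT_iff char_vec_eq_iff chi_tmult tmult_torus)
next
  fix y assume "y \<in> char_fibre (char_vec n r g t)"
  then have y: "y \<in> torus n" "\<forall>i<r. chi n (g i) y = chi n (g i) t"
    by (auto simp: char_fibre_def char_vec_eq_iff)
  define h where "h = (\<lambda>j. y j / t j)"
  have th: "tmult t h = y"
    using torus_nonzero[OF t] by (simp add: h_def tmult_def)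
  have "h \<in> torus n"
    using y(1) t by (auto simp: h_def torus_def)
  moreover have "chi n (g i) h = 1" if "i < r" for i
    using y(2) that th chi_tmult chi_nonzero[OF t] by (metis mult_cancel_left1)
  ultimately have "h \<in> stabT n r g x"
    by (simp add: stabT_iff)
  then show "y \<in> cosetT n (stabT n r g x) t"
    using th unfolding cosetT_def by auto
qed

lemma sq_stabT_iff:
  assumes "t \<in> torus n"
  shows "tmult t t \<in> stabT n r g x \<longleftrightarrow> sign_vec r (char_vec n r g t)"
proof -
  have "a * a = 1 \<longleftrightarrow> a = 1 \<or> a = -1" for a :: complex
    by algebra
  with assms show ?thesis
    by (simp add: stabT_iff sign_vec_char_vec chi_tmult tmult_torus)
qed

lemma bij_char_fibre_twoA: "bij_betw char_fibre sign_chars (twoA n r g x)"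
proof (rule bij_betw_imageI)
  show "inj_on char_fibre sign_chars"
  proof
    fix s s' assume "s \<in> sign_chars" "char_fibre s = char_fibre s'"
    then obtain t where "t \<in> char_fibre s" "t \<in> char_fibre s'"
      by (auto simp: sign_chars_def char_fibre_def)
    then show "s = s'"
      by (simp add: char_fibre_def)
  qed
  have "twoA n r g x = {char_fibre (char_vec n r g t) | t. t \<in> torus n \<and> sign_vec r (char_vec n r g t)}"
    unfolding twoA_def by (metis (no_types, lifting) cosetT_stabT sq_stabT_iff)
  then show "char_fibre ` sign_chars = twoA n r g x"
    by (auto simp: sign_chars_def)
qed

end

locale real_slice_point = slice_point +
  fixes mu :: "(nat \<Rightarrow> complex) \<Rightarrow> nat \<Rightarrow> complex"
  assumes mu_equiv: "\<And>t z. t \<in> torus n \<Longrightarrow> z \<in> affsp r \<Longrightarrow>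
                       mu (act n r g t z) = act n r g (sigmaT t) (mu z)"
    and x_real: "mu x = x"
begin

lemma real_act_x_iff:
  assumes t: "t \<in> torus n"
  shows "mu (act n r g t x) = act n r g t x \<longleftrightarrow> (\<forall>i<r. chi n (g i) t \<in> \<real>)"
proof -
  have "mu (act n r g t x) = act n r g (sigmaT t) x"
    using mu_equiv[OF t x_Z] x_real by simp
  then show ?thesis
    by (simp add: act_x_eq_iff char_vec_eq_iff chi_sigmaT Reals_cnj_iff)
qed

lemma real_open_part_eq:
  "real_open_part n r g mu x = {act n r g t x | t. t \<in> torus n \<and> (\<forall>i<r. chi n (g i) t \<in> \<real>)}"
  using real_act_x_iff by (auto simp: real_open_part_def open_part_def)

lemma pos_orbit_real_point:
  assumes t: "t \<in> torus n" and real: "\<forall>i<r. chi n (g i) t \<in> \<real>"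
  obtains s where "s \<in> sign_chars" "pos_orbit n r g (act n r g t x) = pos_orbit n r g (\<lambda>i. s i * x i)"
proof -
  obtain u p where u: "u \<in> torus n" and p: "p \<in> torus_sigma0 n" and tup: "t = tmult u p"
    and norm_u: "\<And>h. norm (chi n h u) = 1"
    using torus_polar_decomposition[OF t] by blast
  have "chi n (g i) u = 1 \<or> chi n (g i) u = -1" if i: "i < r" for i
  proof -
    obtain \<rho> where \<rho>: "\<rho> > 0" "chi n (g i) p = of_real \<rho>"
      using chi_torus_sigma0[OF p] .
    have "chi n (g i) u = chi n (g i) t / of_real \<rho>"
      using \<rho> by (simp add: tup chi_tmult)
    then have "chi n (g i) u \<in> \<real>"
      using real i by simp
    then show ?thesis
      using norm_u real_unit_complex by blast
  qed
  then have "char_vec n r g u \<in> sign_chars"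
    using u by (auto simp: sign_chars_def sign_vec_char_vec)
  moreover have "act n r g t x = act n r g p (act n r g u x)"
    by (simp add: tup act_tmult tmult_def mult.commute)
  then have "pos_orbit n r g (act n r g t x) = pos_orbit n r g (act n r g u x)"
    by (simp add: pos_orbit_act[OF p])
  ultimately show ?thesis
    using that by (simp add: act_x)
qed

lemma bij_sign_chars_orbits:
  "bij_betw (\<lambda>s. pos_orbit n r g (\<lambda>i. s i * x i)) sign_chars (sigma0_orbits n r g mu x)"
proof (rule bij_betw_imageI)
  show "inj_on (\<lambda>s. pos_orbit n r g (\<lambda>i. s i * x i)) sign_chars"
  proof (rule inj_onI)
    fix s s' assume "s \<in> sign_chars" "s' \<in> sign_chars"
      and "pos_orbit n r g (\<lambda>i. s i * x i) = pos_orbit n r g (\<lambda>i. s' i * x i)"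
    moreover have "sign_vec r c" if "c \<in> sign_chars" for c
      using that by (auto simp: sign_chars_def)
    ultimately show "s = s'"
      using pos_orbit_sign_vec_inj x_open by blast
  qed
  have "sigma0_orbits n r g mu x = pos_orbit n r g ` real_open_part n r g mu x"
    by (simp add: sigma0_orbits_def pos_orbit_def Setcompr_eq_image)
  also have "\<dots> = (\<lambda>s. pos_orbit n r g (\<lambda>i. s i * x i)) ` sign_chars"
  proof (intro equalityI subsetI)
    fix Orb assume "Orb \<in> pos_orbit n r g ` real_open_part n r g mu x"
    then obtain z where z: "z \<in> real_open_part n r g mu x" "Orb = pos_orbit n r g z"
      by blast
    then obtain t where t: "t \<in> torus n" "\<forall>i<r. chi n (g i) t \<in> \<real>"
      and Orb: "Orb = pos_orbit n r g (act n r g t x)"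
      unfolding real_open_part_eq by blast
    obtain s where "s \<in> sign_chars" "Orb = pos_orbit n r g (\<lambda>i. s i * x i)"
      using pos_orbit_real_point[OF t] unfolding Orb by blast
    then show "Orb \<in> (\<lambda>s. pos_orbit n r g (\<lambda>i. s i * x i)) ` sign_chars"
      by blast
  next
    fix Orb assume "Orb \<in> (\<lambda>s. pos_orbit n r g (\<lambda>i. s i * x i)) ` sign_chars"
    then obtain t where t: "t \<in> torus n" "sign_vec r (char_vec n r g t)"
      and Orb: "Orb = pos_orbit n r g (act n r g t x)"
      by (auto simp: sign_chars_def act_x)
    have "\<forall>i<r. chi n (g i) t \<in> \<real>"
      using t(2) by (auto simp: sign_vec_char_vec)
    then have "act n r g t x \<in> real_open_part n r g mu x"
      using t(1) unfolding real_open_part_eq by blast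
    then show "Orb \<in> pos_orbit n r g ` real_open_part n r g mu x"
      unfolding Orb by (rule imageI)
  qed
  finally show "(\<lambda>s. pos_orbit n r g (\<lambda>i. s i * x i)) ` sign_chars = sigma0_orbits n r g mu x"
    by (rule sym)
qed

end

theorem proposition5p3:
  fixes n r :: nat
    and g :: "nat \<Rightarrow> nat \<Rightarrow> int"
    and mu :: "(nat \<Rightarrow> complex) \<Rightarrow> (nat \<Rightarrow> complex)"
    and x :: "nat \<Rightarrow> complex"
  assumes indep: "lin_indep_chars n r g"
    and mu_Z: "\<And>z. z \<in> affsp r \<Longrightarrow> mu z \<in> affsp r"
    and mu_inv: "\<And>z. z \<in> affsp r \<Longrightarrow> mu (mu z) = z"
    and mu_equiv: "\<And>t z. t \<in> torus n \<Longrightarrow> z \<in> affsp r \<Longrightarrow>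
                     mu (act n r g t z) = act n r g (sigmaT t) (mu z)"
    and x_Z: "x \<in> affsp r"
    and x_open: "\<And>i. i < r \<Longrightarrow> x i \<noteq> 0"
    and x_real: "mu x = x"
  shows "(\<exists>f. bij_betw f (sigma0_orbits n r g mu x) (twoA n r g x))
         \<and> finite (sigma0_orbits n r g mu x)
         \<and> card (sigma0_orbits n r g mu x) \<le> 2 ^ r"
proof -
  interpret real_slice_point n r g x mu
    using mu_equiv x_Z x_open x_real by unfold_locales
  note orbits = bij_sign_chars_orbits
  have "bij_betw (char_fibre \<circ> inv_into sign_chars (\<lambda>s. pos_orbit n r g (\<lambda>i. s i * x i)))
      (sigma0_orbits n r g mu x) (twoA n r g x)"
    using bij_betw_inv_into[OF orbits] bij_char_fibre_twoA by (rule bij_betw_trans)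
  moreover have "finite (sigma0_orbits n r g mu x)"
    using bij_betw_finite[OF orbits] finite_card_sign_chars by simp
  moreover have "card (sigma0_orbits n r g mu x) \<le> 2 ^ r"
    using bij_betw_same_card[OF orbits] finite_card_sign_chars by simp
  ultimately show ?thesis
    by blast
qed

end
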